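(* Let $\mathbb X$ be a basic space and $\mathcal D=(D,<,\rho)$ a computable partially ordered set. 1. If $<$ is empty, then $\mathrm{PR}[\mathbb X\to\mathcal D]=\mathrm{Max}_{\mathrm{PR}}[\mathbb X\to\mathcal D]$ and $\mathrm{Rec}[\mathbb X\to\mathcal D]=\mathrm{Max}_{\mathrm{Rec}}[\mathbb X\to\mathcal D]$. 2. If $<$ is not empty, then $\mathrm{Max}_{\mathrm{Rec}}[\mathbb X\to\mathcal D]$ contains non-computable total functions; in particular $\mathrm{PR}[\mathbb X\to\mathcal D]\subsetneq\mathrm{Max}_{\mathrm{PR}}[\mathbb X\to\mathcal D]$ and $\mathrm{Rec}[\mathbb X\to\mathcal D]\subsetneq\mathrm{Max}_{\mathrm{Rec}}[\mathbb X\to\mathcal D]$. 3. Whatever $<$ is, $\mathrm{PR}[\mathbb X\to\mathcal D]$ is not included in $\mathrm{Min}_{\mathrm{Rec}}[\mathbb X\to\mathcal D]\cup\mathrm{Max}_{\mathrm{Rec}}[\mathbb X\to\mathcal D]$.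
   Context: A basic space is a finite non-empty product of sets each of which is $\mathbb N$, $\mathbb Z$, or $A^*$ for some finite alphabet $A$. A computable partially ordered set is a triple $\mathcal D=(D,<,\rho)$ where $\rho:\mathbb N\to D$ is a bijection and $<$ is a strict partial order on $D$ with $\{(m,n):\rho(m)<\rho(n)\}$ computable; a partial function into $D$ is partial (resp. total) computable if its composition with $\rho^{-1}$ is. $\mathrm{PR}[\mathbb X\to\mathcal D]$ and $\mathrm{Rec}[\mathbb X\to\mathcal D]$ denote the partial computable and the total computable functions $\mathbb X\to D$. For a partial $f:\mathbb X\times\mathbb N\to D$ monotone increasing (resp. decreasing) in its second argument on its domain, $\max^{\mathcal D}f$ (resp. $\min^{\mathcal D}f$) is the partial function defined exactly at those $x$ for which $\{f(x,t):t,\ f(x,t)\text{ defined}\}$ is finite and non-empty, with value its maximum (resp. minimum). $\mathrm{Max}_{\mathrm{PR}}$ (resp. $\mathrm{Max}_{\mathrm{Rec}}$) $[\mathbb X\to\mathcal D]$ is the class of all $\max^{\mathcal D}f$ with $f$ partial computable (resp. total computable) and monotone increasing in its second argument; $\mathrm{Min}_{\mathrm{Rec}}[\mathbb X\to\mathcal D]$ is the class of all $\min^{\mathcal D}f$ with $f$ total computable and monotone decreasing in its second argument. *)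

theory Defs
  imports Main "HOL-Library.Nat_Bijection"
begin

inductive partrec :: "(nat \<Rightarrow> nat option) \<Rightarrow> bool" where
  pr_zero: "partrec (\<lambda>_. Some 0)"
| pr_succ: "partrec (\<lambda>n. Some (Suc n))"
| pr_left: "partrec (\<lambda>n. Some (fst (prod_decode n)))"
| pr_right: "partrec (\<lambda>n. Some (snd (prod_decode n)))"
| pr_pair: "partrec f \<Longrightarrow> partrec g \<Longrightarrow>
    partrec (\<lambda>n. Option.bind (f n) (\<lambda>a. Option.bind (g n) (\<lambda>b. Some (prod_encode (a, b)))))"
| pr_comp: "partrec f \<Longrightarrow> partrec g \<Longrightarrow> partrec (\<lambda>n. Option.bind (g n) f)"
| pr_prec: "partrec f \<Longrightarrow> partrec g \<Longrightarrow>
    partrec (\<lambda>n. rec_nat (f (fst (prod_decode n)))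
       (\<lambda>y r. Option.bind r (\<lambda>i. g (prod_encode (fst (prod_decode n), prod_encode (y, i)))))
       (snd (prod_decode n)))"
| pr_mu: "partrec f \<Longrightarrow>
    partrec (\<lambda>n. if (\<exists>k. f (prod_encode (n, k)) = Some 0 \<and> (\<forall>j<k. f (prod_encode (n, j)) \<noteq> None))
                 then Some (LEAST k. f (prod_encode (n, k)) = Some 0 \<and> (\<forall>j<k. f (prod_encode (n, j)) \<noteq> None))
                 else None)"

definition decidable_nat :: "(nat \<Rightarrow> bool) \<Rightarrow> bool" where
  "decidable_nat P \<longleftrightarrow> (\<exists>g. partrec g \<and> (\<forall>n. g n = Some (if P n then 1 else 0)))"

text \<open>A factor is N, Z, or A* for a finite alphabet A = {0..<k}.\<close>
datatype bcomp = BN | BZ | BW nat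

datatype bval = VN nat | VZ int | VW "nat list"

fun in_comp :: "bcomp \<Rightarrow> bval \<Rightarrow> bool" where
  "in_comp BN (VN _) = True"
| "in_comp BZ (VZ _) = True"
| "in_comp (BW k) (VW w) = (\<forall>a\<in>set w. a < k)"
| "in_comp _ _ = False"

definition bspace :: "bcomp list \<Rightarrow> bval list set" where
  "bspace cs = {xs. list_all2 in_comp cs xs}"

definition basic_space :: "bcomp list \<Rightarrow> bool" where
  "basic_space cs \<longleftrightarrow> cs \<noteq> [] \<and> (\<forall>k. BW k \<in> set cs \<longrightarrow> k \<ge> 1)"

fun enc_val :: "bval \<Rightarrow> nat" where
  "enc_val (VN n) = n"
| "enc_val (VZ z) = int_encode z"
| "enc_val (VW w) = list_encode w"

text \<open>Standard (injective, decidable-image) coding of basic-space points by naturals.\<close>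
definition benc :: "bval list \<Rightarrow> nat" where
  "benc xs = list_encode (map enc_val xs)"

definition comp_poset :: "('d \<Rightarrow> 'd \<Rightarrow> bool) \<Rightarrow> (nat \<Rightarrow> 'd) \<Rightarrow> bool" where
  "comp_poset lt \<rho> \<longleftrightarrow> bij \<rho> \<and> irreflp lt \<and> transp lt \<and>
     decidable_nat (\<lambda>p. lt (\<rho> (fst (prod_decode p))) (\<rho> (snd (prod_decode p))))"

definition PR :: "bcomp list \<Rightarrow> (nat \<Rightarrow> 'd) \<Rightarrow> (bval list \<Rightarrow> 'd option) set" where
  "PR cs \<rho> = {f. (\<forall>x. x \<notin> bspace cs \<longrightarrow> f x = None) \<and>
      (\<exists>g. partrec g \<and> (\<forall>x\<in>bspace cs. g (benc x) = map_option (inv \<rho>) (f x)))}"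

definition Rec :: "bcomp list \<Rightarrow> (nat \<Rightarrow> 'd) \<Rightarrow> (bval list \<Rightarrow> 'd option) set" where
  "Rec cs \<rho> = {f \<in> PR cs \<rho>. \<forall>x\<in>bspace cs. f x \<noteq> None}"

text \<open>Partial functions X x N -> D (curried), undefined off X x N; computability
  is with respect to the basic space X x N.\<close>
definition PR2 :: "bcomp list \<Rightarrow> (nat \<Rightarrow> 'd) \<Rightarrow> (bval list \<Rightarrow> nat \<Rightarrow> 'd option) set" where
  "PR2 cs \<rho> = {f. (\<forall>x t. x \<notin> bspace cs \<longrightarrow> f x t = None) \<and>
      (\<exists>g. partrec g \<and> (\<forall>x\<in>bspace cs. \<forall>t. g (benc (x @ [VN t])) = map_option (inv \<rho>) (f x t)))}"

definition Rec2 :: "bcomp list \<Rightarrow> (nat \<Rightarrow> 'd) \<Rightarrow> (bval list \<Rightarrow> nat \<Rightarrow> 'd option) set" where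
  "Rec2 cs \<rho> = {f \<in> PR2 cs \<rho>. \<forall>x\<in>bspace cs. \<forall>t. f x t \<noteq> None}"

definition mono_inc :: "('d \<Rightarrow> 'd \<Rightarrow> bool) \<Rightarrow> (bval list \<Rightarrow> nat \<Rightarrow> 'd option) \<Rightarrow> bool" where
  "mono_inc lt f \<longleftrightarrow> (\<forall>x t s a b. t \<le> s \<longrightarrow> f x t = Some a \<longrightarrow> f x s = Some b \<longrightarrow> a = b \<or> lt a b)"

definition mono_dec :: "('d \<Rightarrow> 'd \<Rightarrow> bool) \<Rightarrow> (bval list \<Rightarrow> nat \<Rightarrow> 'd option) \<Rightarrow> bool" where
  "mono_dec lt f \<longleftrightarrow> (\<forall>x t s a b. t \<le> s \<longrightarrow> f x t = Some a \<longrightarrow> f x s = Some b \<longrightarrow> a = b \<or> lt b a)"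

definition maxf :: "('d \<Rightarrow> 'd \<Rightarrow> bool) \<Rightarrow> (bval list \<Rightarrow> nat \<Rightarrow> 'd option) \<Rightarrow> bval list \<Rightarrow> 'd option" where
  "maxf lt f x = (let V = {d. \<exists>t. f x t = Some d} in
     if finite V \<and> V \<noteq> {} then Some (THE m. m \<in> V \<and> (\<forall>d\<in>V. d = m \<or> lt d m)) else None)"

definition minf :: "('d \<Rightarrow> 'd \<Rightarrow> bool) \<Rightarrow> (bval list \<Rightarrow> nat \<Rightarrow> 'd option) \<Rightarrow> bval list \<Rightarrow> 'd option" where
  "minf lt f x = (let V = {d. \<exists>t. f x t = Some d} in
     if finite V \<and> V \<noteq> {} then Some (THE m. m \<in> V \<and> (\<forall>d\<in>V. d = m \<or> lt m d)) else None)"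

definition MaxPR :: "bcomp list \<Rightarrow> ('d \<Rightarrow> 'd \<Rightarrow> bool) \<Rightarrow> (nat \<Rightarrow> 'd) \<Rightarrow> (bval list \<Rightarrow> 'd option) set" where
  "MaxPR cs lt \<rho> = {maxf lt f | f. f \<in> PR2 cs \<rho> \<and> mono_inc lt f}"

definition MaxRec :: "bcomp list \<Rightarrow> ('d \<Rightarrow> 'd \<Rightarrow> bool) \<Rightarrow> (nat \<Rightarrow> 'd) \<Rightarrow> (bval list \<Rightarrow> 'd option) set" where
  "MaxRec cs lt \<rho> = {maxf lt f | f. f \<in> Rec2 cs \<rho> \<and> mono_inc lt f}"

definition MinRec :: "bcomp list \<Rightarrow> ('d \<Rightarrow> 'd \<Rightarrow> bool) \<Rightarrow> (nat \<Rightarrow> 'd) \<Rightarrow> (bval list \<Rightarrow> 'd option) set" where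
  "MinRec cs lt \<rho> = {minf lt f | f. f \<in> Rec2 cs \<rho> \<and> mono_dec lt f}"

end

theory Submission
  imports Defs
begin

text \<open>If the order is empty, a monotone approximation is constant on its domain, so its maximum
  is found by an unbounded search for a defined value, which is partial computable.  If
  \<open>a < b\<close>, the total approximation that outputs \<open>a\<close> until the diagonal computation
  \<open>\<phi>\<^sub>e(e)\<close> has halted and \<open>b\<close> afterwards has as maximum a function deciding the halting
  problem.  Finally, the partial computable function that searches for two different values of
  \<open>t \<mapsto> \<phi>\<^sub>e(x, t)\<close> (with \<open>e\<close> read off from \<open>x\<close>) and outputs \<open>\<phi>\<^sub>e(x, 0)\<close> differs from every
  maximum or minimum of a total monotone approximation \<open>\<phi>\<^sub>e\<close>: at the point \<open>x\<close> coding \<open>e\<close>,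
  a constant approximation has a defined extremum while a non-constant one has an extremum
  different from \<open>\<phi>\<^sub>e(x, 0)\<close>.  All computations are carried out by a universal machine for
  the codes of partial recursive functions, run for a bounded number of steps.\<close>

section \<open>Total recursive functions\<close>

abbreviation npair :: "nat \<Rightarrow> nat \<Rightarrow> nat" where "npair a b \<equiv> prod_encode (a, b)"
abbreviation nfst :: "nat \<Rightarrow> nat" where "nfst n \<equiv> fst (prod_decode n)"
abbreviation nsnd :: "nat \<Rightarrow> nat" where "nsnd n \<equiv> snd (prod_decode n)"

definition total_rec :: "(nat \<Rightarrow> nat) \<Rightarrow> bool" where
  "total_rec f \<longleftrightarrow> partrec (\<lambda>n. Some (f n))"

lemma total_rec_comp: "total_rec f \<Longrightarrow> total_rec g \<Longrightarrow> total_rec (\<lambda>n. f (g n))"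
  unfolding total_rec_def using pr_comp[of "\<lambda>n. Some (f n)" "\<lambda>n. Some (g n)"] by simp

lemma total_rec_pair: "total_rec f \<Longrightarrow> total_rec g \<Longrightarrow> total_rec (\<lambda>n. npair (f n) (g n))"
  unfolding total_rec_def using pr_pair[of "\<lambda>n. Some (f n)" "\<lambda>n. Some (g n)"] by simp

lemma total_rec_nfst: "total_rec f \<Longrightarrow> total_rec (\<lambda>n. nfst (f n))"
  using total_rec_comp[OF pr_left[folded total_rec_def]] .

lemma total_rec_nsnd: "total_rec f \<Longrightarrow> total_rec (\<lambda>n. nsnd (f n))"
  using total_rec_comp[OF pr_right[folded total_rec_def]] .

lemma total_rec_Suc: "total_rec f \<Longrightarrow> total_rec (\<lambda>n. Suc (f n))"
  using total_rec_comp[OF pr_succ[folded total_rec_def]] .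

lemma total_rec_id: "total_rec (\<lambda>n. n)"
  using total_rec_pair[OF pr_left[folded total_rec_def] pr_right[folded total_rec_def]] by simp

lemma total_rec_const: "total_rec (\<lambda>_. k)"
proof (induction k)
  case 0
  show ?case using pr_zero by (simp add: total_rec_def)
next
  case (Suc k)
  then show ?case by (rule total_rec_Suc)
qed

lemma rec_nat_Some:
  "rec_nat (Some a) (\<lambda>y r. Option.bind r (\<lambda>i. Some (G y i))) m = Some (rec_nat a G m)"
  by (induction m) auto

lemma total_rec_prec:
  assumes "total_rec f" "total_rec g"
  shows "total_rec (\<lambda>n. rec_nat (f (nfst n)) (\<lambda>y i. g (npair (nfst n) (npair y i))) (nsnd n))"
  using assms pr_prec[of "\<lambda>n. Some (f n)" "\<lambda>n. Some (g n)"]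
  unfolding total_rec_def by (simp add: rec_nat_Some)

lemma total_rec_funpow:
  assumes "total_rec F" "total_rec init" "total_rec cnt"
  shows "total_rec (\<lambda>n. (F ^^ cnt n) (init n))"
proof -
  have "rec_nat a (\<lambda>_ i. F i) m = (F ^^ m) a" for a m
    by (induction m) auto
  moreover have "total_rec (\<lambda>m. rec_nat (nfst m) (\<lambda>y i. F (nsnd (nsnd (npair (nfst m) (npair y i))))) (nsnd m))"
    by (rule total_rec_prec[OF total_rec_id total_rec_comp[OF assms(1) total_rec_nsnd[OF total_rec_nsnd[OF total_rec_id]]]])
  ultimately have "total_rec (\<lambda>m. (F ^^ nsnd m) (nfst m))" by simp
  from total_rec_comp[OF this total_rec_pair[OF assms(2,3)]] show ?thesis by simp
qed

lemma total_rec_if_zero: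
  assumes "total_rec c" "total_rec a" "total_rec b"
  shows "total_rec (\<lambda>n. if c n = 0 then a n else b n)"
proof -
  have "rec_nat a (\<lambda>y i. b) z = (if z = 0 then a else b)" for a b z :: nat
    by (cases z) auto
  moreover have "total_rec (\<lambda>m. rec_nat (nfst (nfst m)) (\<lambda>y i. nsnd (nfst (npair (nfst m) (npair y i)))) (nsnd m))"
    by (rule total_rec_prec[OF total_rec_nfst[OF total_rec_id] total_rec_nsnd[OF total_rec_nfst[OF total_rec_id]]])
  ultimately have "total_rec (\<lambda>m. if nsnd m = 0 then nfst (nfst m) else nsnd (nfst m))"
    by simp
  from total_rec_comp[OF this total_rec_pair[OF total_rec_pair[OF assms(2,3)] assms(1)]]
  show ?thesis by (simp cong: if_cong)
qed

lemma total_rec_minus: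
  assumes "total_rec f" "total_rec g"
  shows "total_rec (\<lambda>n. f n - g n)"
proof -
  have "rec_nat 0 (\<lambda>y i. y) z = z - 1" for z :: nat
    by (cases z) auto
  moreover have "total_rec (\<lambda>m. rec_nat 0 (\<lambda>y i. nfst (nsnd (npair (nfst m) (npair y i)))) (nsnd m))"
    by (rule total_rec_prec[OF total_rec_const total_rec_nfst[OF total_rec_nsnd[OF total_rec_id]]])
  ultimately have "total_rec (\<lambda>m. nsnd m - 1)" by simp
  from total_rec_comp[OF this total_rec_pair[OF total_rec_const total_rec_id]]
  have "total_rec (\<lambda>n. n - 1)" by simp
  moreover have "((\<lambda>n::nat. n - 1) ^^ b) a = a - b" for a b
    by (induction b) auto
  ultimately show ?thesis
    using total_rec_funpow[of "\<lambda>n. n - 1", OF _ assms] by simp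
qed

lemma total_rec_plus:
  assumes "total_rec f" "total_rec g"
  shows "total_rec (\<lambda>n. f n + g n)"
proof -
  have "(Suc ^^ b) a = a + b" for a b
    by (induction b) auto
  then show ?thesis
    using total_rec_funpow[OF total_rec_Suc[OF total_rec_id] assms] by (simp add: add.commute)
qed

lemma total_rec_if_eq:
  assumes "total_rec c\<^sub>1" "total_rec c\<^sub>2" "total_rec a" "total_rec b"
  shows "total_rec (\<lambda>n. if c\<^sub>1 n = c\<^sub>2 n then a n else b n)"
proof -
  have "(c\<^sub>1 n - c\<^sub>2 n) + (c\<^sub>2 n - c\<^sub>1 n) = 0 \<longleftrightarrow> c\<^sub>1 n = c\<^sub>2 n" for n
    by auto
  moreover have "total_rec (\<lambda>n. if (c\<^sub>1 n - c\<^sub>2 n) + (c\<^sub>2 n - c\<^sub>1 n) = 0 then a n else b n)"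
    using assms by (intro total_rec_if_zero total_rec_plus total_rec_minus)
  ultimately show ?thesis by simp
qed

lemmas total_rec_intros = total_rec_if_eq total_rec_pair total_rec_nfst total_rec_nsnd
  total_rec_Suc total_rec_minus total_rec_plus total_rec_funpow total_rec_id total_rec_const

lemma partrec_comp_total_rec: "partrec f \<Longrightarrow> total_rec g \<Longrightarrow> partrec (\<lambda>n. f (g n))"
  unfolding total_rec_def using pr_comp[of f "\<lambda>n. Some (g n)"] by simp

lemma partrec_map_option: "partrec f \<Longrightarrow> total_rec h \<Longrightarrow> partrec (\<lambda>n. map_option h (f n))"
proof -
  assume "partrec f" "total_rec h"
  then have "partrec (\<lambda>n. Option.bind (f n) (\<lambda>x. Some (h x)))"
    using pr_comp[of "\<lambda>x. Some (h x)" f] unfolding total_rec_def by simp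
  moreover have "Option.bind (f n) (\<lambda>x. Some (h x)) = map_option h (f n)" for n
    by (cases "f n") auto
  ultimately show ?thesis by simp
qed

lemma bind_if_Some: "Option.bind (if P then Some a else None) f = (if P then f a else None)"
  by simp

lemma partrec_search:
  assumes "total_rec H" "total_rec out"
  shows "partrec (\<lambda>n. if \<exists>k. H (npair n k) = 0
                      then Some (out (npair n (LEAST k. H (npair n k) = 0))) else None)"
proof -
  have "partrec (\<lambda>n. if \<exists>k. H (npair n k) = 0 then Some (LEAST k. H (npair n k) = 0) else None)"
    using pr_mu[of "\<lambda>n. Some (H n)"] assms(1) unfolding total_rec_def by (simp cong: if_cong)
  from pr_pair[OF total_rec_id[unfolded total_rec_def] this]
  have "partrec (\<lambda>n. if \<exists>k. H (npair n k) = 0 then Some (npair n (LEAST k. H (npair n k) = 0)) else None)"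
    by (simp add: bind_if_Some)
  from partrec_map_option[OF this assms(2)] show ?thesis
    by (simp add: if_distrib cong: if_cong)
qed

lemma partrec_defined_at_zero: "partrec (\<lambda>z. if z = 0 then Some 0 else None)"
  using pr_mu[OF pr_left] by (simp cong: if_cong)

section \<open>A universal machine\<close>

datatype code = Zero | Succ | Left | Right | Pairing code code | Comp code code | Prec code code | Mu code

primrec sem :: "code \<Rightarrow> nat \<Rightarrow> nat option" where
  "sem Zero = (\<lambda>_. Some 0)"
| "sem Succ = (\<lambda>n. Some (Suc n))"
| "sem Left = (\<lambda>n. Some (nfst n))"
| "sem Right = (\<lambda>n. Some (nsnd n))"
| "sem (Pairing c d) = (\<lambda>n. Option.bind (sem c n) (\<lambda>a. Option.bind (sem d n) (\<lambda>b. Some (npair a b))))"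
| "sem (Comp f g) = (\<lambda>n. Option.bind (sem g n) (sem f))"
| "sem (Prec f g) = (\<lambda>n. rec_nat (sem f (nfst n))
       (\<lambda>y r. Option.bind r (\<lambda>i. sem g (npair (nfst n) (npair y i)))) (nsnd n))"
| "sem (Mu f) = (\<lambda>n.
     if \<exists>k. sem f (npair n k) = Some 0 \<and> (\<forall>j<k. sem f (npair n j) \<noteq> None)
     then Some (LEAST k. sem f (npair n k) = Some 0 \<and> (\<forall>j<k. sem f (npair n j) \<noteq> None))
     else None)"

lemma partrec_imp_sem: "partrec f \<Longrightarrow> \<exists>c. sem c = f"
proof (induction rule: partrec.induct)
  case (pr_pair f g)
  then obtain c d where "sem c = f" "sem d = g" by blast
  then show ?case by (intro exI[of _ "Pairing c d"]) simp
next
  case (pr_comp f g)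
  then obtain c d where "sem c = f" "sem d = g" by blast
  then show ?case by (intro exI[of _ "Comp c d"]) simp
next
  case (pr_prec f g)
  then obtain c d where "sem c = f" "sem d = g" by blast
  then show ?case by (intro exI[of _ "Prec c d"]) simp
next
  case (pr_mu f)
  then obtain c where "sem c = f" by blast
  then show ?case by (intro exI[of _ "Mu c"]) (simp only: sem.simps)
qed (metis sem.simps)+

text \<open>A small-step machine with explicit continuations; \<open>Kprec g x i y k\<close> waits for the
  \<open>i\<close>-th value of a primitive recursion of length \<open>y\<close>, \<open>Kmu f n j k\<close> for \<open>f(n, j)\<close>
  during a search.\<close>

datatype cont = Khalt | KpairL code nat cont | KpairR nat cont | Kcomp code cont
  | Kprec code nat nat nat cont | Kmu code nat nat cont

datatype cfg = Eval code nat cont | Ret cont nat | Halt nat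

fun step :: "cfg \<Rightarrow> cfg" where
  "step (Eval Zero n k) = Ret k 0"
| "step (Eval Succ n k) = Ret k (Suc n)"
| "step (Eval Left n k) = Ret k (nfst n)"
| "step (Eval Right n k) = Ret k (nsnd n)"
| "step (Eval (Pairing c d) n k) = Eval c n (KpairL d n k)"
| "step (Eval (Comp f g) n k) = Eval g n (Kcomp f k)"
| "step (Eval (Prec f g) n k) = Eval f (nfst n) (Kprec g (nfst n) 0 (nsnd n) k)"
| "step (Eval (Mu f) n k) = Eval f (npair n 0) (Kmu f n 0 k)"
| "step (Ret Khalt v) = Halt v"
| "step (Ret (KpairL d n k) a) = Eval d n (KpairR a k)"
| "step (Ret (KpairR a k) b) = Ret k (npair a b)"
| "step (Ret (Kcomp f k) v) = Eval f v k"
| "step (Ret (Kprec g x i y k) r) =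
     (if i = y then Ret k r else Eval g (npair x (npair i r)) (Kprec g x (Suc i) y k))"
| "step (Ret (Kmu f n j k) v) =
     (if v = 0 then Ret k j else Eval f (npair n (Suc j)) (Kmu f n (Suc j) k))"
| "step (Halt v) = Halt v"

primrec enc_code :: "code \<Rightarrow> nat" where
  "enc_code Zero = npair 0 0"
| "enc_code Succ = npair 1 0"
| "enc_code Left = npair 2 0"
| "enc_code Right = npair 3 0"
| "enc_code (Pairing c d) = npair 4 (npair (enc_code c) (enc_code d))"
| "enc_code (Comp f g) = npair 5 (npair (enc_code f) (enc_code g))"
| "enc_code (Prec f g) = npair 6 (npair (enc_code f) (enc_code g))"
| "enc_code (Mu f) = npair 7 (enc_code f)"

primrec enc_cont :: "cont \<Rightarrow> nat" where
  "enc_cont Khalt = npair 0 0"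
| "enc_cont (KpairL d n k) = npair 1 (npair (enc_code d) (npair n (enc_cont k)))"
| "enc_cont (KpairR a k) = npair 2 (npair a (enc_cont k))"
| "enc_cont (Kcomp f k) = npair 3 (npair (enc_code f) (enc_cont k))"
| "enc_cont (Kprec g x i y k) = npair 4 (npair (enc_code g) (npair x (npair i (npair y (enc_cont k)))))"
| "enc_cont (Kmu f n j k) = npair 5 (npair (enc_code f) (npair n (npair j (enc_cont k))))"

primrec enc_cfg :: "cfg \<Rightarrow> nat" where
  "enc_cfg (Eval c n k) = npair 0 (npair (enc_code c) (npair n (enc_cont k)))"
| "enc_cfg (Ret k v) = npair 1 (npair (enc_cont k) v)"
| "enc_cfg (Halt v) = npair 2 v"

text \<open>\<open>step_code\<close> simulates \<open>step\<close> on codes (\<open>step_code_enc_cfg\<close>); \<open>step_eval_code\<close> and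
  \<open>step_ret_code\<close> act on the payload of a coded \<open>Eval\<close> and \<open>Ret\<close> configuration.\<close>

definition step_eval_code :: "nat \<Rightarrow> nat" where
  "step_eval_code b = (let c = nfst b; n = nfst (nsnd b); k = nsnd (nsnd b); ct = nfst c; ca = nsnd c in
     if ct = 0 then npair 1 (npair k 0)
     else if ct = 1 then npair 1 (npair k (Suc n))
     else if ct = 2 then npair 1 (npair k (nfst n))
     else if ct = 3 then npair 1 (npair k (nsnd n))
     else if ct = 4 then npair 0 (npair (nfst ca) (npair n (npair 1 (npair (nsnd ca) (npair n k)))))
     else if ct = 5 then npair 0 (npair (nsnd ca) (npair n (npair 3 (npair (nfst ca) k))))
     else if ct = 6 then
       npair 0 (npair (nfst ca) (npair (nfst n) (npair 4 (npair (nsnd ca) (npair (nfst n) (npair 0 (npair (nsnd n) k)))))))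
     else npair 0 (npair ca (npair (npair n 0) (npair 5 (npair ca (npair n (npair 0 k)))))))"

definition step_ret_code :: "nat \<Rightarrow> nat" where
  "step_ret_code b = (let k = nfst b; v = nsnd b; kt = nfst k; kb = nsnd k in
     if kt = 0 then npair 2 v
     else if kt = 1 then npair 0 (npair (nfst kb) (npair (nfst (nsnd kb)) (npair 2 (npair v (nsnd (nsnd kb))))))
     else if kt = 2 then npair 1 (npair (nsnd kb) (npair (nfst kb) v))
     else if kt = 3 then npair 0 (npair (nfst kb) (npair v (nsnd kb)))
     else if kt = 4 then
       (let g = nfst kb; x = nfst (nsnd kb); i = nfst (nsnd (nsnd kb));
            y = nfst (nsnd (nsnd (nsnd kb))); k' = nsnd (nsnd (nsnd (nsnd kb))) in
        if i = y then npair 1 (npair k' v)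
        else npair 0 (npair g (npair (npair x (npair i v)) (npair 4 (npair g (npair x (npair (Suc i) (npair y k'))))))))
     else
       (let f = nfst kb; n = nfst (nsnd kb); j = nfst (nsnd (nsnd kb)); k' = nsnd (nsnd (nsnd kb)) in
        if v = 0 then npair 1 (npair k' j)
        else npair 0 (npair f (npair (npair n (Suc j)) (npair 5 (npair f (npair n (npair (Suc j) k'))))))))"

definition step_code :: "nat \<Rightarrow> nat" where
  "step_code z =
     (if nfst z = 0 then step_eval_code (nsnd z) else if nfst z = 1 then step_ret_code (nsnd z) else z)"

lemma step_code_enc_cfg: "step_code (enc_cfg c) = enc_cfg (step c)"
proof (cases c)
  case (Eval cd n k)
  then show ?thesis
    by (cases cd) (simp_all add: step_code_def step_eval_code_def step_ret_code_def Let_def)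
next
  case (Ret k v)
  then show ?thesis
    by (cases k) (simp_all add: step_code_def step_eval_code_def step_ret_code_def Let_def)
qed (simp add: step_code_def)

lemma total_rec_step_code: "total_rec step_code"
proof -
  have e: "total_rec (\<lambda>z. step_eval_code z)" and r: "total_rec (\<lambda>z. step_ret_code z)"
    unfolding step_eval_code_def step_ret_code_def Let_def by (intro total_rec_intros)+
  have "total_rec (\<lambda>z. step_code z)"
    unfolding step_code_def by (intro total_rec_intros total_rec_comp[OF e] total_rec_comp[OF r])
  then show ?thesis by simp
qed

lemma step_code_fixes_halted: "nfst z = 2 \<Longrightarrow> step_code z = z"
  by (simp add: step_code_def)

definition run :: "nat \<Rightarrow> cfg \<Rightarrow> cfg" where
  "run s c = (step ^^ s) c"

lemma run_0 [simp]: "run 0 c = c"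
  by (simp add: run_def)

lemma run_Suc: "run (Suc s) c = run s (step c)"
  unfolding run_def funpow_Suc_right by simp

lemma run_Halt [simp]: "run s (Halt v) = Halt v"
  by (induction s) (simp_all add: run_Suc)

lemma run_SucE:
  assumes "run s c = Halt w" "\<And>v. c \<noteq> Halt v"
  obtains s' where "s = Suc s'" "run s' (step c) = Halt w"
  using assms by (cases s) (auto simp: run_Suc)

abbreviation reaches :: "cfg \<Rightarrow> cfg \<Rightarrow> bool" where
  "reaches \<equiv> (\<lambda>x y. y = step x)\<^sup>*\<^sup>*"

lemma reaches_step: "reaches (step x) z \<Longrightarrow> reaches x z"
  by (rule converse_rtranclp_into_rtranclp[of _ x "step x"]) auto

lemma reaches_imp_run: "reaches x z \<Longrightarrow> \<exists>s. run s x = z"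
proof (induction rule: converse_rtranclp_induct)
  case base
  show ?case by (rule exI[of _ 0]) simp
next
  case (step a b)
  then obtain s where "run s b = z" by blast
  with step show ?case by (metis run_Suc)
qed

primrec prec_loop :: "code \<Rightarrow> nat \<Rightarrow> nat \<Rightarrow> nat \<Rightarrow> nat \<Rightarrow> nat option" where
  "prec_loop g x i 0 r = Some r"
| "prec_loop g x i (Suc d) r = Option.bind (sem g (npair x (npair i r))) (prec_loop g x (Suc i) d)"

lemma sem_Prec: "sem (Prec f g) n = Option.bind (sem f (nfst n)) (prec_loop g (nfst n) 0 (nsnd n))"
proof -
  define R where "R = rec_nat (sem f (nfst n)) (\<lambda>y r. Option.bind r (\<lambda>i. sem g (npair (nfst n) (npair y i))))"
  have "Option.bind (R i) (prec_loop g (nfst n) i d) = R (i + d)" for i d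
  proof (induction d arbitrary: i)
    case (Suc d)
    have "Option.bind (R i) (prec_loop g (nfst n) i (Suc d)) = Option.bind (R (Suc i)) (prec_loop g (nfst n) (Suc i) d)"
      by (simp add: R_def Option.bind_assoc prec_loop.simps(2)[abs_def])
    then show ?case by (simp only: Suc.IH add_Suc_shift)
  qed (simp add: prec_loop.simps(1)[abs_def])
  from this[of 0 "nsnd n"] show ?thesis by (simp add: R_def)
qed

lemma sem_Mu_eq_Some:
  "sem (Mu f) n = Some v \<longleftrightarrow> sem f (npair n v) = Some 0 \<and> (\<forall>i<v. \<exists>u. sem f (npair n i) = Some (Suc u))"
    (is "_ \<longleftrightarrow> ?zero v \<and> ?positive v")
proof -
  define Q where "Q k \<longleftrightarrow> sem f (npair n k) = Some 0 \<and> (\<forall>j<k. sem f (npair n j) \<noteq> None)" for k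
  have sem_Mu: "sem (Mu f) n = (if \<exists>k. Q k then Some (LEAST k. Q k) else None)"
    by (simp add: Q_def)
  have least: "(LEAST k. Q k) = v" if "?zero v" "?positive v"
  proof (rule Least_equality)
    show "Q v" using that by (auto simp: Q_def)
    show "v \<le> k" if "Q k" for k
      using \<open>Q k\<close> \<open>?positive v\<close> by (metis Q_def leI nat.distinct(1) option.inject)
  qed
  show ?thesis
  proof
    assume "sem (Mu f) n = Some v"
    then have ex: "\<exists>k. Q k" and v: "v = (LEAST k. Q k)"
      unfolding sem_Mu by (auto split: if_splits)
    have "Q v" unfolding v using ex by (rule LeastI_ex)
    moreover have "\<not> Q i" if "i < v" for i
      using that unfolding v by (rule not_less_Least)
    ultimately show "?zero v \<and> ?positive v"
      unfolding Q_def by (metis not0_implies_Suc not_None_eq order.strict_trans)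
  next
    assume "?zero v \<and> ?positive v"
    moreover from this have "Q v" by (auto simp: Q_def)
    ultimately show "sem (Mu f) n = Some v" unfolding sem_Mu using least by auto
  qed
qed

text \<open>From now on recursion and search are unfolded only through \<open>sem_Prec\<close> and \<open>sem_Mu_eq_Some\<close>.\<close>

declare sem.simps(7,8) [simp del]

lemma reaches_prec_loop:
  assumes sem_g: "\<And>m u k. sem g m = Some u \<Longrightarrow> reaches (Eval g m k) (Ret k u)"
  shows "prec_loop g x i d r = Some v \<Longrightarrow> reaches (Ret (Kprec g x i (i + d) k) r) (Ret k v)"
proof (induction d arbitrary: i r)
  case 0
  then show ?case by - (rule reaches_step, simp)
next
  case (Suc d)
  then obtain r' where r': "sem g (npair x (npair i r)) = Some r'" "prec_loop g x (Suc i) d r' = Some v"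
    by (auto simp: bind_eq_Some_conv)
  let ?k = "Kprec g x (Suc i) (i + Suc d) k"
  have "reaches (Eval g (npair x (npair i r)) ?k) (Ret ?k r')"
    by (rule sem_g[OF r'(1)])
  moreover have "reaches (Ret ?k r') (Ret k v)"
    using Suc.IH[OF r'(2)] by simp
  ultimately have "reaches (Eval g (npair x (npair i r)) ?k) (Ret k v)"
    by (rule rtranclp_trans)
  then show ?case by - (rule reaches_step, simp)
qed

lemma reaches_mu_loop:
  assumes sem_f: "\<And>m u k. sem f m = Some u \<Longrightarrow> reaches (Eval f m k) (Ret k u)"
    and zero: "sem f (npair n v) = Some 0"
    and positive: "\<forall>i<v. \<exists>u. sem f (npair n i) = Some (Suc u)"
  shows "j \<le> v \<Longrightarrow> reaches (Eval f (npair n j) (Kmu f n j k)) (Ret k v)"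
proof (induction "v - j" arbitrary: j)
  case 0
  then have "j = v" by simp
  have "reaches (Eval f (npair n j) (Kmu f n j k)) (Ret (Kmu f n j k) 0)"
    using sem_f[OF zero] \<open>j = v\<close> by simp
  moreover have "reaches (Ret (Kmu f n j k) 0) (Ret k v)"
    using \<open>j = v\<close> by - (rule reaches_step, simp)
  ultimately show ?case by (rule rtranclp_trans)
next
  case (Suc d)
  then have "j < v" by simp
  then obtain u where u: "sem f (npair n j) = Some (Suc u)"
    using positive by blast
  have "reaches (Eval f (npair n j) (Kmu f n j k)) (Ret (Kmu f n j k) (Suc u))"
    by (rule sem_f[OF u])
  moreover have "reaches (Ret (Kmu f n j k) (Suc u)) (Ret k v)"
    using Suc by - (rule reaches_step, simp)
  ultimately show ?case by (rule rtranclp_trans)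
qed

lemma sem_reaches: "sem c n = Some v \<Longrightarrow> reaches (Eval c n k) (Ret k v)"
proof (induction c arbitrary: n v k)
  case (Pairing c d)
  then obtain a b where ab: "sem c n = Some a" "sem d n = Some b" "v = npair a b"
    by (auto split: Option.bind_splits)
  have "reaches (Eval c n (KpairL d n k)) (Ret (KpairL d n k) a)"
    by (rule Pairing.IH(1)[OF ab(1)])
  moreover have "reaches (Ret (KpairL d n k) a) (Ret (KpairR a k) b)"
    by (rule reaches_step) (use Pairing.IH(2) ab in simp)
  moreover have "reaches (Ret (KpairR a k) b) (Ret k v)"
    by (rule reaches_step) (use ab in simp)
  ultimately have "reaches (Eval c n (KpairL d n k)) (Ret k v)"
    by (meson rtranclp_trans)
  then show ?case by - (rule reaches_step, simp)
next
  case (Comp f g)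
  then obtain u where u: "sem g n = Some u" "sem f u = Some v"
    by (auto split: Option.bind_splits)
  have "reaches (Eval g n (Kcomp f k)) (Ret (Kcomp f k) u)"
    by (rule Comp.IH(2)[OF u(1)])
  moreover have "reaches (Ret (Kcomp f k) u) (Ret k v)"
    by (rule reaches_step) (use Comp.IH(1) u in simp)
  ultimately have "reaches (Eval g n (Kcomp f k)) (Ret k v)"
    by (rule rtranclp_trans)
  then show ?case by - (rule reaches_step, simp)
next
  case (Prec f g)
  obtain r where r: "sem f (nfst n) = Some r" "prec_loop g (nfst n) 0 (nsnd n) r = Some v"
    using Prec.prems unfolding sem_Prec by (auto simp: bind_eq_Some_conv)
  let ?k = "Kprec g (nfst n) 0 (nsnd n) k"
  have "reaches (Eval f (nfst n) ?k) (Ret ?k r)"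
    by (rule Prec.IH(1)[OF r(1)])
  moreover have "reaches (Ret ?k r) (Ret k v)"
    using reaches_prec_loop[OF Prec.IH(2) r(2)] by simp
  ultimately have "reaches (Eval f (nfst n) ?k) (Ret k v)"
    by (rule rtranclp_trans)
  then show ?case by - (rule reaches_step, simp)
next
  case (Mu f)
  from Mu.prems have "sem f (npair n v) = Some 0" "\<forall>i<v. \<exists>u. sem f (npair n i) = Some (Suc u)"
    unfolding sem_Mu_eq_Some by auto
  then have "reaches (Eval f (npair n 0) (Kmu f n 0 k)) (Ret k v)"
    using reaches_mu_loop[OF Mu.IH] by blast
  then show ?case by - (rule reaches_step, simp)
qed (auto intro: reaches_step[where x = "Eval _ _ _"])

lemma run_prec_loop:
  assumes run_g: "\<And>s' m k' w'. s' < s \<Longrightarrow> run s' (Eval g m k') = Halt w' \<Longrightarrow>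
      \<exists>u s''. sem g m = Some u \<and> s'' < s' \<and> run s'' (Ret k' u) = Halt w'"
  shows "run s\<^sub>1 (Ret (Kprec g x i (i + d) k) r) = Halt w \<Longrightarrow> s\<^sub>1 < s \<Longrightarrow>
      \<exists>v s'. prec_loop g x i d r = Some v \<and> s' < s\<^sub>1 \<and> run s' (Ret k v) = Halt w"
proof (induction d arbitrary: i r s\<^sub>1)
  case 0
  then obtain s' where "s\<^sub>1 = Suc s'" "run s' (Ret k r) = Halt w"
    by (auto elim: run_SucE)
  then show ?case by auto
next
  case (Suc d)
  then obtain s\<^sub>2 where s\<^sub>2: "s\<^sub>1 = Suc s\<^sub>2"
      "run s\<^sub>2 (Eval g (npair x (npair i r)) (Kprec g x (Suc i) (Suc i + d) k)) = Halt w"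
    by (auto elim: run_SucE)
  then obtain u s\<^sub>3 where u: "sem g (npair x (npair i r)) = Some u" "s\<^sub>3 < s\<^sub>2"
      "run s\<^sub>3 (Ret (Kprec g x (Suc i) (Suc i + d) k) u) = Halt w"
    using run_g Suc.prems(2) by (metis Suc_lessD)
  moreover have "s\<^sub>3 < s"
    using u(2) s\<^sub>2(1) Suc.prems(2) by simp
  ultimately obtain v s' where "prec_loop g x (Suc i) d u = Some v" "s' < s\<^sub>3" "run s' (Ret k v) = Halt w"
    using Suc.IH by blast
  then show ?case
    using u(1,2) s\<^sub>2(1) by - (rule exI[of _ v], rule exI[of _ s'], simp)
qed

lemma run_mu_loop:
  assumes run_f: "\<And>s' m k' w'. s' < s \<Longrightarrow> run s' (Eval f m k') = Halt w' \<Longrightarrow>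
      \<exists>u s''. sem f m = Some u \<and> s'' < s' \<and> run s'' (Ret k' u) = Halt w'"
  shows "run s\<^sub>1 (Eval f (npair n j) (Kmu f n j k)) = Halt w \<Longrightarrow> s\<^sub>1 < s \<Longrightarrow>
      \<forall>i<j. \<exists>u. sem f (npair n i) = Some (Suc u) \<Longrightarrow>
      \<exists>v s'. sem (Mu f) n = Some v \<and> s' < s\<^sub>1 \<and> run s' (Ret k v) = Halt w"
proof (induction s\<^sub>1 arbitrary: j rule: less_induct)
  case (less s\<^sub>1)
  obtain u s\<^sub>2 where u: "sem f (npair n j) = Some u" "s\<^sub>2 < s\<^sub>1"
      "run s\<^sub>2 (Ret (Kmu f n j k) u) = Halt w"
    using run_f less.prems(1,2) by blast
  then obtain s\<^sub>3 where s\<^sub>3: "s\<^sub>2 = Suc s\<^sub>3" "run s\<^sub>3 (step (Ret (Kmu f n j k) u)) = Halt w"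
    by (auto elim: run_SucE)
  show ?case
  proof (cases u)
    case 0
    have "sem (Mu f) n = Some j"
      unfolding sem_Mu_eq_Some using u(1) less.prems(3) 0 by simp
    moreover have "s\<^sub>3 < s\<^sub>1"
      using s\<^sub>3(1) u(2) by simp
    ultimately show ?thesis
      using s\<^sub>3(2) 0 by auto
  next
    case (Suc u')
    have run': "run s\<^sub>3 (Eval f (npair n (Suc j)) (Kmu f n (Suc j) k)) = Halt w"
      using s\<^sub>3(2) Suc by simp
    have positive: "\<forall>i<Suc j. \<exists>u. sem f (npair n i) = Some (Suc u)"
      using u(1) less.prems(3) Suc less_Suc_eq by auto
    have "s\<^sub>3 < s\<^sub>1" "s\<^sub>3 < s"
      using s\<^sub>3(1) u(2) less.prems(2) by simp_all
    with less.IH[OF _ run' _ positive] show ?thesis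
      by (meson order.strict_trans)
  qed
qed

lemma run_sem:
  "run s (Eval c n k) = Halt w \<Longrightarrow> \<exists>v s'. sem c n = Some v \<and> s' < s \<and> run s' (Ret k v) = Halt w"
proof (induction s arbitrary: c n k w rule: less_induct)
  case (less s)
  obtain s\<^sub>0 where s\<^sub>0: "s = Suc s\<^sub>0" "run s\<^sub>0 (step (Eval c n k)) = Halt w"
    using less.prems by (auto elim: run_SucE)
  then have IH: "\<And>s' c' m k' w'. s' \<le> s\<^sub>0 \<Longrightarrow> run s' (Eval c' m k') = Halt w' \<Longrightarrow>
      \<exists>u s''. sem c' m = Some u \<and> s'' < s' \<and> run s'' (Ret k' u) = Halt w'"
    using less.IH by simp
  show ?case
  proof (cases c)
    case (Pairing c\<^sub>1 c\<^sub>2)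
    have "run s\<^sub>0 (Eval c\<^sub>1 n (KpairL c\<^sub>2 n k)) = Halt w"
      using s\<^sub>0 Pairing by simp
    then obtain a s\<^sub>1 where a: "sem c\<^sub>1 n = Some a" "s\<^sub>1 < s\<^sub>0" "run s\<^sub>1 (Ret (KpairL c\<^sub>2 n k) a) = Halt w"
      using IH[of s\<^sub>0] by blast
    then obtain s\<^sub>2 where "s\<^sub>1 = Suc s\<^sub>2" "run s\<^sub>2 (Eval c\<^sub>2 n (KpairR a k)) = Halt w"
      by (auto elim: run_SucE)
    moreover from this obtain b s\<^sub>3 where b: "sem c\<^sub>2 n = Some b" "s\<^sub>3 < s\<^sub>2"
        "run s\<^sub>3 (Ret (KpairR a k) b) = Halt w"
      using IH[of s\<^sub>2] a(2) by force
    moreover from b(3) obtain s\<^sub>4 where "s\<^sub>3 = Suc s\<^sub>4" "run s\<^sub>4 (Ret k (npair a b)) = Halt w"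
      by (auto elim: run_SucE)
    ultimately show ?thesis using Pairing a s\<^sub>0 by - (rule exI[of _ "npair a b"], rule exI[of _ s\<^sub>4], simp)
  next
    case (Comp f g)
    have "run s\<^sub>0 (Eval g n (Kcomp f k)) = Halt w"
      using s\<^sub>0 Comp by simp
    then obtain a s\<^sub>1 where a: "sem g n = Some a" "s\<^sub>1 < s\<^sub>0" "run s\<^sub>1 (Ret (Kcomp f k) a) = Halt w"
      using IH[of s\<^sub>0] by blast
    then obtain s\<^sub>2 where "s\<^sub>1 = Suc s\<^sub>2" "run s\<^sub>2 (Eval f a k) = Halt w"
      by (auto elim: run_SucE)
    moreover from this obtain b s\<^sub>3 where "sem f a = Some b" "s\<^sub>3 < s\<^sub>2" "run s\<^sub>3 (Ret k b) = Halt w"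
      using IH[of s\<^sub>2] a(2) by force
    ultimately show ?thesis using Comp a s\<^sub>0 by - (rule exI[of _ b], rule exI[of _ s\<^sub>3], simp)
  next
    case (Prec f g)
    let ?k = "Kprec g (nfst n) 0 (0 + nsnd n) k"
    have "run s\<^sub>0 (Eval f (nfst n) ?k) = Halt w"
      using s\<^sub>0 Prec by simp
    then obtain r s\<^sub>1 where r: "sem f (nfst n) = Some r" "s\<^sub>1 < s\<^sub>0" "run s\<^sub>1 (Ret ?k r) = Halt w"
      using IH[of s\<^sub>0] by blast
    then obtain v s' where "prec_loop g (nfst n) 0 (nsnd n) r = Some v" "s' < s\<^sub>1" "run s' (Ret k v) = Halt w"
      using run_prec_loop[of s g] less.IH s\<^sub>0(1) by (metis less_Suc_eq)
    then show ?thesis using Prec r s\<^sub>0(1) by - (rule exI[of _ v], rule exI[of _ s'], simp add: sem_Prec)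
  next
    case (Mu f)
    have "\<exists>v s'. sem (Mu f) n = Some v \<and> s' < s\<^sub>0 \<and> run s' (Ret k v) = Halt w"
      by (rule run_mu_loop[OF less.IH]) (use s\<^sub>0 Mu in auto)
    then show ?thesis
      using Mu s\<^sub>0(1) by (meson less_SucI)
  qed (use s\<^sub>0 in auto)
qed

text \<open>\<open>mstate c n s\<close> is the coded configuration after \<open>s\<close> steps of the machine started on the
  code number \<open>c\<close> with input \<open>n\<close>; it is meaningful for every \<open>c\<close>, coding a program or not.\<close>

definition mstate :: "nat \<Rightarrow> nat \<Rightarrow> nat \<Rightarrow> nat" where
  "mstate c n s = (step_code ^^ s) (npair 0 (npair c (npair n (npair 0 0))))"

definition halted :: "nat \<Rightarrow> nat \<Rightarrow> nat \<Rightarrow> bool" where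
  "halted c n s \<longleftrightarrow> nfst (mstate c n s) = 2"

definition result :: "nat \<Rightarrow> nat \<Rightarrow> nat \<Rightarrow> nat" where
  "result c n s = nsnd (mstate c n s)"

lemma total_rec_mstate:
  "total_rec a \<Longrightarrow> total_rec b \<Longrightarrow> total_rec c \<Longrightarrow> total_rec (\<lambda>m. mstate (a m) (b m) (c m))"
  unfolding mstate_def by (intro total_rec_intros total_rec_step_code)

lemma total_rec_if_halted:
  assumes "total_rec a" "total_rec b" "total_rec c" "total_rec p" "total_rec q"
  shows "total_rec (\<lambda>m. if halted (a m) (b m) (c m) then p m else q m)"
  unfolding halted_def using assms by (intro total_rec_intros total_rec_mstate)

lemma total_rec_result:
  "total_rec a \<Longrightarrow> total_rec b \<Longrightarrow> total_rec c \<Longrightarrow> total_rec (\<lambda>m. result (a m) (b m) (c m))"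
  unfolding result_def by (intro total_rec_nsnd total_rec_mstate)

lemma mstate_enc_code: "mstate (enc_code cd) n s = enc_cfg (run s (Eval cd n Khalt))"
proof -
  have "(step_code ^^ s) (enc_cfg c) = enc_cfg (run s c)" for c
    by (induction s arbitrary: c) (simp_all del: funpow.simps add: funpow_Suc_right step_code_enc_cfg run_Suc)
  from this[of "Eval cd n Khalt"] show ?thesis by (simp add: mstate_def)
qed

lemma halted_enc_code_iff:
  "halted (enc_code cd) n s \<and> result (enc_code cd) n s = v \<longleftrightarrow> run s (Eval cd n Khalt) = Halt v"
  unfolding halted_def result_def mstate_enc_code
  by (cases "run s (Eval cd n Khalt)") simp_all

lemma sem_eq_Some_iff_halted:
  "sem cd n = Some v \<longleftrightarrow> (\<exists>s. halted (enc_code cd) n s \<and> result (enc_code cd) n s = v)"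
proof
  assume "sem cd n = Some v"
  then have "reaches (Eval cd n Khalt) (Ret Khalt v)" by (rule sem_reaches)
  also have "reaches (Ret Khalt v) (Halt v)" by (rule r_into_rtranclp) simp
  finally obtain s where "run s (Eval cd n Khalt) = Halt v"
    using reaches_imp_run by blast
  then show "\<exists>s. halted (enc_code cd) n s \<and> result (enc_code cd) n s = v"
    using halted_enc_code_iff by blast
next
  assume "\<exists>s. halted (enc_code cd) n s \<and> result (enc_code cd) n s = v"
  then obtain s where "run s (Eval cd n Khalt) = Halt v"
    using halted_enc_code_iff by blast
  then obtain v' s' where "sem cd n = Some v'" "run s' (Ret Khalt v') = Halt v"
    using run_sem by blast
  then show "sem cd n = Some v"
    by (cases s') (simp_all add: run_Suc)
qed

lemma halted_mono:
  assumes "halted c n s" "s \<le> s'"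
  shows "halted c n s' \<and> result c n s' = result c n s"
proof -
  have "(step_code ^^ m) (mstate c n s) = mstate c n s" for m
    using assms(1) by (induction m) (simp_all add: halted_def step_code_fixes_halted)
  moreover have "mstate c n s' = (step_code ^^ (s' - s)) (mstate c n s)"
    using assms(2) unfolding mstate_def by (metis funpow_add comp_apply le_add_diff_inverse2)
  ultimately have "mstate c n s' = mstate c n s" by simp
  with assms(1) show ?thesis by (simp add: halted_def result_def)
qed

section \<open>Coding points of basic spaces\<close>

primrec snoc_code :: "nat \<Rightarrow> nat \<Rightarrow> nat \<Rightarrow> nat" where
  "snoc_code 0 n t = Suc (npair t 0)"
| "snoc_code (Suc m) n t = Suc (npair (nfst (n - 1)) (snoc_code m (nsnd (n - 1)) t))"

primrec butlast_code :: "nat \<Rightarrow> nat \<Rightarrow> nat" where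
  "butlast_code 0 n = 0"
| "butlast_code (Suc m) n = Suc (npair (nfst (n - 1)) (butlast_code m (nsnd (n - 1))))"

primrec last_code :: "nat \<Rightarrow> nat \<Rightarrow> nat" where
  "last_code 0 n = nfst (n - 1)"
| "last_code (Suc m) n = last_code m (nsnd (n - 1))"

lemma snoc_code_list_encode:
  "length xs = m \<Longrightarrow> snoc_code m (list_encode xs) t = list_encode (xs @ [t])"
  by (induction xs arbitrary: m) (auto split: nat.splits)

lemma butlast_code_list_encode:
  "length xs = m \<Longrightarrow> butlast_code m (list_encode (xs @ [t])) = list_encode xs"
  by (induction xs arbitrary: m) (auto split: nat.splits)

lemma last_code_list_encode: "length xs = m \<Longrightarrow> last_code m (list_encode (xs @ [t])) = t"
  by (induction xs arbitrary: m) (auto split: nat.splits)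

lemma total_rec_snoc_code: "total_rec a \<Longrightarrow> total_rec b \<Longrightarrow> total_rec (\<lambda>q. snoc_code m (a q) (b q))"
proof (induction m arbitrary: a)
  case 0
  then show ?case by (simp, intro total_rec_intros)
next
  case (Suc m)
  have "total_rec (\<lambda>q. nsnd (a q - 1))"
    using Suc.prems by (intro total_rec_intros)
  then have "total_rec (\<lambda>q. snoc_code m (nsnd (a q - 1)) (b q))"
    using Suc by blast
  with Suc.prems show ?case by (simp, intro total_rec_intros)
qed

lemma total_rec_butlast_code: "total_rec a \<Longrightarrow> total_rec (\<lambda>q. butlast_code m (a q))"
proof (induction m arbitrary: a)
  case 0
  then show ?case by (simp, intro total_rec_intros)
next
  case (Suc m)
  have "total_rec (\<lambda>q. nsnd (a q - 1))"
    using Suc.prems by (intro total_rec_intros)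
  then have "total_rec (\<lambda>q. butlast_code m (nsnd (a q - 1)))"
    using Suc by blast
  with Suc.prems show ?case by (simp, intro total_rec_intros)
qed

lemma total_rec_last_code: "total_rec a \<Longrightarrow> total_rec (\<lambda>q. last_code m (a q))"
proof (induction m arbitrary: a)
  case 0
  then show ?case by (simp, intro total_rec_intros)
next
  case (Suc m)
  have "total_rec (\<lambda>q. nsnd (a q - 1))"
    using Suc.prems by (intro total_rec_intros)
  then show ?case using Suc by simp
qed

definition unary :: "nat \<Rightarrow> nat" where
  "unary e = ((\<lambda>L. Suc (npair 0 L)) ^^ e) 0"

lemma unary_eq_list_encode: "unary e = list_encode (replicate e 0)"
  by (induction e) (simp_all add: unary_def)

lemma total_rec_unary: "total_rec a \<Longrightarrow> total_rec (\<lambda>q. unary (a q))"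
  unfolding unary_def by (intro total_rec_intros)

definition length_step :: "nat \<Rightarrow> nat" where
  "length_step q = (if nfst q = 0 then q else npair (nsnd (nfst q - 1)) (Suc (nsnd q)))"

text \<open>A coded list is consumed by at most as many steps as its code number.\<close>

definition code_length :: "nat \<Rightarrow> nat" where
  "code_length n = nsnd ((length_step ^^ n) (npair n 0))"

lemma length_le_list_encode: "length xs \<le> list_encode xs"
proof (induction xs)
  case (Cons x xs)
  have "list_encode xs \<le> npair x (list_encode xs)"
    by (rule le_prod_encode_2)
  with Cons.IH show ?case by simp
qed simp

lemma code_length_list_encode: "code_length (list_encode xs) = length xs"
proof -
  have consume: "(length_step ^^ length xs) (npair (list_encode xs) c) = npair 0 (c + length xs)" for c
    by (induction xs arbitrary: c) (simp_all add: length_step_def funpow_Suc_right del: funpow.simps)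
  have fixed: "(length_step ^^ m) (npair 0 c) = npair 0 c" for m c
    by (induction m) (simp_all add: length_step_def)
  obtain d where d: "list_encode xs = d + length xs"
    using length_le_list_encode le_add_diff_inverse2 by metis
  have "(length_step ^^ (d + length xs)) (npair (list_encode xs) 0) = npair 0 (length xs)"
    by (simp add: funpow_add consume fixed)
  then show ?thesis unfolding code_length_def by (simp add: d)
qed

lemma total_rec_code_length: "total_rec a \<Longrightarrow> total_rec (\<lambda>q. code_length (a q))"
proof -
  assume "total_rec a"
  moreover have "total_rec (\<lambda>q. length_step q)"
    unfolding length_step_def by (intro total_rec_intros)
  ultimately show ?thesis
    unfolding code_length_def by (intro total_rec_intros) simp_all
qed

lemma bspace_length: "x \<in> bspace cs \<Longrightarrow> length x = length cs"
  unfolding bspace_def by (simp add: list_all2_lengthD)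

lemma benc_snoc: "x \<in> bspace cs \<Longrightarrow> benc (x @ [VN t]) = snoc_code (length cs) (benc x) t"
  by (simp add: benc_def snoc_code_list_encode bspace_length)

lemma butlast_code_benc: "x \<in> bspace cs \<Longrightarrow> butlast_code (length cs) (benc (x @ [VN t])) = benc x"
  by (simp add: benc_def butlast_code_list_encode bspace_length)

lemma last_code_benc: "x \<in> bspace cs \<Longrightarrow> last_code (length cs) (benc (x @ [VN t])) = t"
  by (simp add: benc_def last_code_list_encode bspace_length)

text \<open>Every basic space contains, for each \<open>e\<close>, a point \<open>index_point cs e\<close> from whose code \<open>e\<close> is
  computably recovered: its first coordinate is coded by \<open>unary e\<close>, whatever the first factor.\<close>

fun default_val :: "bcomp \<Rightarrow> bval" where
  "default_val BN = VN 0"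
| "default_val BZ = VZ 0"
| "default_val (BW k) = VW []"

fun index_val :: "bcomp \<Rightarrow> nat \<Rightarrow> bval" where
  "index_val BN e = VN (unary e)"
| "index_val BZ e = VZ (int_decode (unary e))"
| "index_val (BW k) e = VW (replicate e 0)"

definition index_point :: "bcomp list \<Rightarrow> nat \<Rightarrow> bval list" where
  "index_point cs e = index_val (hd cs) e # map default_val (tl cs)"

definition point_index :: "nat \<Rightarrow> nat" where
  "point_index n = code_length (nfst (n - 1))"

lemma index_point_in_bspace: "basic_space cs \<Longrightarrow> index_point cs e \<in> bspace cs"
proof -
  assume bs: "basic_space cs"
  then obtain c cs' where cs: "cs = c # cs'"
    unfolding basic_space_def by (cases cs) auto
  have "in_comp c (index_val c e)"
    using bs cs by (cases c) (auto simp: basic_space_def)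
  moreover have "list_all2 in_comp cs' (map default_val cs')"
  proof (induction cs')
    case (Cons c' cs')
    then show ?case by (cases c') simp_all
  qed simp
  ultimately show ?thesis unfolding bspace_def index_point_def cs by simp
qed

lemma benc_index_point:
  "benc (index_point cs e) = Suc (npair (unary e) (benc (map default_val (tl cs))))"
proof -
  have "enc_val (index_val c e) = unary e" for c
    by (cases c) (simp_all add: unary_eq_list_encode)
  then show ?thesis by (simp add: benc_def index_point_def)
qed

lemma point_index_index_point: "point_index (benc (index_point cs e)) = e"
  by (simp add: point_index_def benc_index_point unary_eq_list_encode code_length_list_encode)

lemma point_index_snoc: "x \<noteq> [] \<Longrightarrow> point_index (benc (x @ [VN t])) = point_index (benc x)"
  by (cases x) (simp_all add: point_index_def benc_def)

lemma total_rec_point_index: "total_rec a \<Longrightarrow> total_rec (\<lambda>q. point_index (a q))"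
  unfolding point_index_def by (intro total_rec_code_length total_rec_intros)

lemma total_rec_benc_index_point: "total_rec (\<lambda>e. benc (index_point cs e))"
  unfolding benc_index_point by (intro total_rec_intros total_rec_unary)

lemma PR2_machine:
  assumes "f \<in> PR2 cs \<rho>" "bij \<rho>"
  obtains c where
    "\<And>x t s. x \<in> bspace cs \<Longrightarrow> halted c (benc (x @ [VN t])) s \<Longrightarrow>
        f x t = Some (\<rho> (result c (benc (x @ [VN t])) s))"
    "\<And>x t d. x \<in> bspace cs \<Longrightarrow> f x t = Some d \<Longrightarrow> \<exists>s. halted c (benc (x @ [VN t])) s"
proof -
  obtain g where "partrec g" and g: "\<forall>x\<in>bspace cs. \<forall>t. g (benc (x @ [VN t])) = map_option (inv \<rho>) (f x t)"
    using assms(1) unfolding PR2_def by blast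
  then obtain cd where "sem cd = g"
    using partrec_imp_sem by blast
  with g have sem_cd: "sem cd (benc (x @ [VN t])) = map_option (inv \<rho>) (f x t)" if "x \<in> bspace cs" for x t
    using that by blast
  show ?thesis
  proof (rule that[of "enc_code cd"])
    fix x t s
    assume "x \<in> bspace cs" "halted (enc_code cd) (benc (x @ [VN t])) s"
    then have "map_option (inv \<rho>) (f x t) = Some (result (enc_code cd) (benc (x @ [VN t])) s)"
      using sem_cd sem_eq_Some_iff_halted by metis
    then obtain z where "f x t = Some z" "inv \<rho> z = result (enc_code cd) (benc (x @ [VN t])) s"
      by auto
    then show "f x t = Some (\<rho> (result (enc_code cd) (benc (x @ [VN t])) s))"
      using assms(2) by (metis bij_is_surj surj_f_inv_f)
  next
    fix x t d
    assume "x \<in> bspace cs" "f x t = Some d"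
    then show "\<exists>s. halted (enc_code cd) (benc (x @ [VN t])) s"
      using sem_cd sem_eq_Some_iff_halted by (metis option.simps(9))
  qed
qed

section \<open>Maxima of monotone approximations\<close>

lemma minf_eq_maxf_conversep: "minf lt = maxf lt\<inverse>\<inverse>"
  unfolding minf_def maxf_def conversep_iff by (rule refl)

lemma mono_dec_eq_mono_inc_conversep: "mono_dec lt = mono_inc lt\<inverse>\<inverse>"
  by (simp add: fun_eq_iff mono_dec_def mono_inc_def)

lemma MinRec_eq_MaxRec_conversep: "MinRec cs lt \<rho> = MaxRec cs lt\<inverse>\<inverse> \<rho>"
  by (simp add: MinRec_def MaxRec_def minf_eq_maxf_conversep mono_dec_eq_mono_inc_conversep)

lemma mono_inc_comparable:
  assumes "mono_inc lt f" "f x t = Some a" "f x s = Some b"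
  shows "a = b \<or> lt a b \<or> lt b a"
  using assms unfolding mono_inc_def by (metis nle_le)

lemma finite_chain_has_greatest:
  assumes "finite V" "V \<noteq> {}" "\<forall>a\<in>V. \<forall>b\<in>V. a = b \<or> lt a b \<or> lt b a" "transp lt"
  shows "\<exists>m\<in>V. \<forall>d\<in>V. d = m \<or> lt d m"
  using assms
proof (induction V rule: finite_ne_induct)
  case (insert x V)
  then obtain m where m: "m \<in> V" "\<forall>d\<in>V. d = m \<or> lt d m"
    by auto
  show ?case
  proof (cases "lt m x")
    case True
    then have "\<forall>d\<in>insert x V. d = x \<or> lt d x"
      using m insert.prems(2) by (auto dest: transpD)
    then show ?thesis by blast
  next
    case False
    then show ?thesis using m insert.prems(1) by auto
  qed
qed simp

lemma The_greatest_eq: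
  assumes "irreflp lt" "transp lt" "m \<in> V" "\<forall>d\<in>V. d = m \<or> lt d m"
  shows "(THE m. m \<in> V \<and> (\<forall>d\<in>V. d = m \<or> lt d m)) = m"
proof (rule the_equality)
  fix m' assume "m' \<in> V \<and> (\<forall>d\<in>V. d = m' \<or> lt d m')"
  with assms show "m' = m"
    by (metis irreflpD transpD)
qed (use assms in blast)

lemma maxf_eq_SomeI:
  assumes "irreflp lt" "transp lt" "finite {d. \<exists>t. f x t = Some d}"
    and "f x t\<^sub>0 = Some m" "\<And>t e. f x t = Some e \<Longrightarrow> e = m \<or> lt e m"
  shows "maxf lt f x = Some m"
proof -
  have "(THE m. m \<in> {d. \<exists>t. f x t = Some d} \<and> (\<forall>d\<in>{d. \<exists>t. f x t = Some d}. d = m \<or> lt d m)) = m"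
    using assms by (intro The_greatest_eq) auto
  with assms(3,4) show ?thesis
    unfolding maxf_def Let_def by auto
qed

lemma maxf_const:
  assumes "f x t\<^sub>0 = Some m" "\<And>t e. f x t = Some e \<Longrightarrow> e = m"
  shows "maxf lt f x = Some m"
proof -
  have "{d. \<exists>t. f x t = Some d} = {m}"
    using assms by blast
  moreover have "(THE m'. m' \<in> {m} \<and> (\<forall>d\<in>{m}. d = m' \<or> lt d m')) = m"
    by (rule the_equality) auto
  ultimately show ?thesis
    unfolding maxf_def Let_def by simp
qed

lemma maxf_eq_None: "(\<And>t. f x t = None) \<Longrightarrow> maxf lt f x = None"
  unfolding maxf_def Let_def by simp

lemma maxf_upper:
  assumes "irreflp lt" "transp lt" "mono_inc lt f" "maxf lt f x = Some m" "f x t = Some e"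
  shows "e = m \<or> lt e m"
proof -
  define V where "V = {d. \<exists>t. f x t = Some d}"
  have "finite V" "V \<noteq> {}"
    using assms(4) unfolding maxf_def Let_def V_def[symmetric] by (auto split: if_splits)
  moreover have "\<forall>a\<in>V. \<forall>b\<in>V. a = b \<or> lt a b \<or> lt b a"
    unfolding V_def using mono_inc_comparable[OF assms(3)] by blast
  ultimately obtain m' where m': "m' \<in> V" "\<forall>d\<in>V. d = m' \<or> lt d m'"
    using finite_chain_has_greatest assms(2) by blast
  then have "maxf lt f x = Some m'"
    using assms(1,2) \<open>finite V\<close> unfolding V_def by (auto intro: maxf_eq_SomeI)
  with assms(4,5) m'(2) show ?thesis
    unfolding V_def by auto
qed

lemma maxf_eq_initial_imp_const:
  assumes "irreflp lt" "transp lt" "mono_inc lt f" "f x 0 = Some d" "maxf lt f x = Some d" "f x t = Some e"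
  shows "e = d"
proof (rule ccontr)
  assume "e \<noteq> d"
  then have "lt e d"
    using maxf_upper[OF assms(1-3,5,6)] by blast
  moreover have "lt d e"
    using assms(3,4,6) \<open>e \<noteq> d\<close> unfolding mono_inc_def by blast
  ultimately show False
    using assms(1,2) by (metis irreflpD transpD)
qed

lemma maxf_empty_order:
  assumes "\<forall>a b. \<not> lt a b" "mono_inc lt f" "f x t = Some d"
  shows "maxf lt f x = Some d"
  using assms mono_inc_comparable[OF assms(2)] by (blast intro: maxf_const)

section \<open>Maxima over the empty order\<close>

lemma const_approx_in_PR2:
  assumes "F \<in> PR cs \<rho>"
  shows "(\<lambda>x t. F x) \<in> PR2 cs \<rho>"
proof -
  obtain g where "partrec g" and g: "\<forall>x\<in>bspace cs. g (benc x) = map_option (inv \<rho>) (F x)"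
    and off: "\<forall>x. x \<notin> bspace cs \<longrightarrow> F x = None"
    using assms unfolding PR_def by blast
  have "partrec (\<lambda>n. g (butlast_code (length cs) n))"
    by (rule partrec_comp_total_rec[OF \<open>partrec g\<close> total_rec_butlast_code[OF total_rec_id]])
  moreover have "g (butlast_code (length cs) (benc (x @ [VN t]))) = map_option (inv \<rho>) (F x)"
    if "x \<in> bspace cs" for x t
    using that g by (simp add: butlast_code_benc)
  ultimately show ?thesis
    unfolding PR2_def using off by blast
qed

lemma maxf_const_approx: "maxf lt (\<lambda>x t. F x) = F"
proof
  fix x
  show "maxf lt (\<lambda>x t. F x) x = F x"
  proof (cases "F x")
    case (Some d)
    have "maxf lt (\<lambda>x t. F x) x = Some d"
      by (rule maxf_const[where t\<^sub>0 = 0]) (simp_all add: Some)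
    with Some show ?thesis by simp
  qed (simp add: maxf_eq_None)
qed

lemma PR_subset_MaxPR: "PR cs \<rho> \<subseteq> MaxPR cs lt \<rho>"
proof
  fix F assume "F \<in> PR cs \<rho>"
  have "mono_inc lt (\<lambda>x t. F x)"
    by (simp add: mono_inc_def)
  with \<open>F \<in> PR cs \<rho>\<close> show "F \<in> MaxPR cs lt \<rho>"
    unfolding MaxPR_def
    by (intro CollectI exI[of _ "\<lambda>x t. F x"]) (simp add: const_approx_in_PR2 maxf_const_approx)
qed

lemma Rec_subset_MaxRec: "Rec cs \<rho> \<subseteq> MaxRec cs lt \<rho>"
proof
  fix F assume "F \<in> Rec cs \<rho>"
  then have "(\<lambda>x t. F x) \<in> Rec2 cs \<rho>"
    unfolding Rec_def Rec2_def using const_approx_in_PR2 by blast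
  moreover have "mono_inc lt (\<lambda>x t. F x)"
    by (simp add: mono_inc_def)
  ultimately show "F \<in> MaxRec cs lt \<rho>"
    unfolding MaxRec_def by (intro CollectI exI[of _ "\<lambda>x t. F x"]) (simp add: maxf_const_approx)
qed

text \<open>Over the empty
  order a monotone approximation takes at most one value at each point, so this search computes
  its maximum.\<close>

definition halted_at :: "nat \<Rightarrow> nat \<Rightarrow> nat \<Rightarrow> nat" where
  "halted_at c m q = (if halted c (snoc_code m (nfst q) (nfst (nsnd q))) (nsnd (nsnd q)) then 0 else 1)"

definition result_at :: "nat \<Rightarrow> nat \<Rightarrow> nat \<Rightarrow> nat" where
  "result_at c m q = result c (snoc_code m (nfst q) (nfst (nsnd q))) (nsnd (nsnd q))"

definition value_search :: "nat \<Rightarrow> nat \<Rightarrow> nat \<Rightarrow> nat option" where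
  "value_search c m n = (if \<exists>k. halted_at c m (npair n k) = 0
     then Some (result_at c m (npair n (LEAST k. halted_at c m (npair n k) = 0))) else None)"

lemma partrec_value_search: "partrec (value_search c m)"
proof -
  have "total_rec (halted_at c m)"
    unfolding halted_at_def[abs_def] by (intro total_rec_if_halted total_rec_snoc_code total_rec_intros)
  moreover have "total_rec (result_at c m)"
    unfolding result_at_def[abs_def] by (intro total_rec_result total_rec_snoc_code total_rec_intros)
  ultimately show ?thesis
    unfolding value_search_def[abs_def] by (rule partrec_search)
qed

lemma value_search_PR2:
  assumes "f \<in> PR2 cs \<rho>" "bij \<rho>"
  obtains c where
    "\<And>x. x \<in> bspace cs \<Longrightarrow> value_search c (length cs) (benc x) = None \<longleftrightarrow> (\<forall>t. f x t = None)"
    "\<And>x r. x \<in> bspace cs \<Longrightarrow> value_search c (length cs) (benc x) = Some r \<Longrightarrow> \<exists>t. f x t = Some (\<rho> r)"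
proof -
  obtain c where
    halted_f: "\<And>x t s. x \<in> bspace cs \<Longrightarrow> halted c (benc (x @ [VN t])) s \<Longrightarrow>
        f x t = Some (\<rho> (result c (benc (x @ [VN t])) s))" and
    f_halted: "\<And>x t d. x \<in> bspace cs \<Longrightarrow> f x t = Some d \<Longrightarrow> \<exists>s. halted c (benc (x @ [VN t])) s"
    using PR2_machine assms by metis
  let ?H = "\<lambda>x k. halted_at c (length cs) (npair (benc x) k)"
  have H: "?H x (npair t s) = 0 \<longleftrightarrow> halted c (benc (x @ [VN t])) s" if "x \<in> bspace cs" for x t s
    by (simp add: halted_at_def benc_snoc[OF that])
  show ?thesis
  proof (rule that)
    fix x assume x: "x \<in> bspace cs"
    have "(\<exists>k. ?H x k = 0) \<longleftrightarrow> (\<exists>t s. halted c (benc (x @ [VN t])) s)"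
      using H[OF x] by (metis prod_decode_inverse prod.collapse)
    also have "\<dots> \<longleftrightarrow> (\<exists>t. f x t \<noteq> None)"
      using halted_f[OF x] f_halted[OF x] by blast
    finally show "value_search c (length cs) (benc x) = None \<longleftrightarrow> (\<forall>t. f x t = None)"
      unfolding value_search_def by auto
  next
    fix x r assume x: "x \<in> bspace cs" and "value_search c (length cs) (benc x) = Some r"
    then have ex: "\<exists>k. ?H x k = 0" and r: "r = result_at c (length cs) (npair (benc x) (LEAST k. ?H x k = 0))"
      unfolding value_search_def by (auto split: if_splits)
    from ex have "?H x (LEAST k. ?H x k = 0) = 0"
      by (rule LeastI_ex)
    with r show "\<exists>t. f x t = Some (\<rho> r)"
      using halted_f[OF x] by (auto simp: halted_at_def result_at_def benc_snoc[OF x] split: if_splits)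
  qed
qed

lemma MaxPR_subset_PR:
  assumes "bij \<rho>" "\<forall>a b. \<not> lt a b"
  shows "MaxPR cs lt \<rho> \<subseteq> PR cs \<rho>"
proof
  fix F assume "F \<in> MaxPR cs lt \<rho>"
  then obtain f where F: "F = maxf lt f" and f: "f \<in> PR2 cs \<rho>" and mono: "mono_inc lt f"
    unfolding MaxPR_def by auto
  obtain c where
    none: "\<And>x. x \<in> bspace cs \<Longrightarrow> value_search c (length cs) (benc x) = None \<longleftrightarrow> (\<forall>t. f x t = None)" and
    some: "\<And>x r. x \<in> bspace cs \<Longrightarrow> value_search c (length cs) (benc x) = Some r \<Longrightarrow> \<exists>t. f x t = Some (\<rho> r)"
    using value_search_PR2[OF f assms(1)] by blast
  have off: "F x = None" if "x \<notin> bspace cs" for x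
    unfolding F using f that by (intro maxf_eq_None) (simp add: PR2_def)
  have "value_search c (length cs) (benc x) = map_option (inv \<rho>) (F x)" if x: "x \<in> bspace cs" for x
  proof (cases "value_search c (length cs) (benc x)")
    case None
    then show ?thesis
      using none[OF x] unfolding F by (simp add: maxf_eq_None)
  next
    case (Some r)
    then obtain t where "f x t = Some (\<rho> r)"
      using some[OF x] by blast
    then have "F x = Some (\<rho> r)"
      unfolding F by (rule maxf_empty_order[OF assms(2) mono])
    with Some assms(1) show ?thesis
      by (simp add: bij_is_inj)
  qed
  then show "F \<in> PR cs \<rho>"
    unfolding PR_def using off partrec_value_search by blast
qed

lemma MaxRec_subset_MaxPR: "MaxRec cs lt \<rho> \<subseteq> MaxPR cs lt \<rho>"
  unfolding MaxRec_def MaxPR_def Rec2_def by blast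

lemma MaxRec_subset_Rec:
  assumes "bij \<rho>" "\<forall>a b. \<not> lt a b"
  shows "MaxRec cs lt \<rho> \<subseteq> Rec cs \<rho>"
proof
  fix F assume F_Max: "F \<in> MaxRec cs lt \<rho>"
  then obtain f where F: "F = maxf lt f" and f: "f \<in> Rec2 cs \<rho>" and mono: "mono_inc lt f"
    unfolding MaxRec_def by auto
  have "F \<in> PR cs \<rho>"
    using F_Max MaxRec_subset_MaxPR MaxPR_subset_PR[OF assms] by blast
  moreover have "F x \<noteq> None" if "x \<in> bspace cs" for x
  proof -
    have "f x 0 \<noteq> None"
      using f that unfolding Rec2_def by simp
    then obtain d where "f x 0 = Some d"
      by blast
    then have "maxf lt f x = Some d"
      by (rule maxf_empty_order[OF assms(2) mono])
    then show ?thesis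
      unfolding F by simp
  qed
  ultimately show "F \<in> Rec cs \<rho>"
    unfolding Rec_def by blast
qed

section \<open>A non-computable maximum\<close>

definition halts :: "nat \<Rightarrow> bool" where
  "halts e \<longleftrightarrow> (\<exists>s. halted e e s)"

lemma no_partrec_decides_halts:
  assumes "partrec g" "\<And>e. g e \<noteq> None"
  shows "\<not> (\<forall>e. g e = Some v \<longleftrightarrow> halts e)"
proof
  assume decides: "\<forall>e. g e = Some v \<longleftrightarrow> halts e"
  define diverge_at where "diverge_at w = (if (if w = v then 1 else 0) = (0::nat) then Some (0::nat) else None)" for w
  have "partrec diverge_at"
    unfolding diverge_at_def[abs_def]
    by (rule partrec_comp_total_rec[OF partrec_defined_at_zero]) (intro total_rec_intros)
  then have "partrec (\<lambda>e. Option.bind (g e) diverge_at)"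
    using pr_comp[OF _ assms(1)] by blast
  then obtain cd where cd: "sem cd = (\<lambda>e. Option.bind (g e) diverge_at)"
    using partrec_imp_sem by blast
  define e where "e = enc_code cd"
  have "halts e \<longleftrightarrow> sem cd e \<noteq> None"
    unfolding halts_def e_def using sem_eq_Some_iff_halted by blast
  also have "\<dots> \<longleftrightarrow> g e \<noteq> Some v"
    using assms(2)[of e] by (cases "g e") (simp_all add: cd diverge_at_def)
  finally show False
    using decides by blast
qed

text \<open>The maximum of this approximation decides whether the diagonal computation coded by the
  point halts.\<close>

definition halting_approx :: "bcomp list \<Rightarrow> 'd \<Rightarrow> 'd \<Rightarrow> bval list \<Rightarrow> nat \<Rightarrow> 'd option" where
  "halting_approx cs a b x t = (if x \<in> bspace cs then
     Some (if halted (point_index (benc x)) (point_index (benc x)) t then b else a) else None)"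

lemma halting_approx_Rec2:
  assumes "basic_space cs"
  shows "halting_approx cs a b \<in> Rec2 cs \<rho>"
proof -
  define h where "h n = (if halted (point_index n) (point_index n) (last_code (length cs) n)
      then inv \<rho> b else inv \<rho> a)" for n
  have "total_rec h"
    unfolding h_def[abs_def]
    by (intro total_rec_if_halted total_rec_point_index total_rec_last_code total_rec_intros)
  moreover have "h (benc (x @ [VN t])) = inv \<rho> (the (halting_approx cs a b x t))"
    if "x \<in> bspace cs" for x t
  proof -
    have "x \<noteq> []"
      using assms that bspace_length unfolding basic_space_def by fastforce
    then show ?thesis
      using that by (simp add: h_def halting_approx_def last_code_benc point_index_snoc)
  qed
  ultimately show ?thesis
    unfolding Rec2_def PR2_def total_rec_def by (auto simp: halting_approx_def)
qed

lemma mono_inc_halting_approx: "lt a b \<Longrightarrow> mono_inc lt (halting_approx cs a b)"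
  unfolding mono_inc_def halting_approx_def using halted_mono by auto

lemma maxf_halting_approx:
  assumes "irreflp lt" "transp lt" "lt a b" "x \<in> bspace cs"
  shows "maxf lt (halting_approx cs a b) x = Some (if halts (point_index (benc x)) then b else a)"
proof (cases "halts (point_index (benc x))")
  case True
  then obtain t where "halted (point_index (benc x)) (point_index (benc x)) t"
    unfolding halts_def by blast
  moreover have "finite {d. \<exists>t. halting_approx cs a b x t = Some d}"
    by (rule finite_subset[of _ "{a, b}"]) (auto simp: halting_approx_def)
  ultimately show ?thesis
    using assms True by (intro maxf_eq_SomeI[where t\<^sub>0 = t]) (auto simp: halting_approx_def)
next
  case False
  with assms(4) show ?thesis
    by (intro maxf_const[where t\<^sub>0 = 0]) (auto simp: halting_approx_def halts_def)
qed

lemma MaxRec_noncomputable: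
  assumes bs: "basic_space cs" and "bij \<rho>" "irreflp lt" "transp lt" "lt a b"
  shows "\<exists>F\<in>MaxRec cs lt \<rho>. (\<forall>x\<in>bspace cs. F x \<noteq> None) \<and> F \<notin> PR cs \<rho>"
proof -
  define F where "F = maxf lt (halting_approx cs a b)"
  have F: "F x = Some (if halts (point_index (benc x)) then b else a)" if "x \<in> bspace cs" for x
    unfolding F_def using maxf_halting_approx assms(3-5) that .
  have "F \<notin> PR cs \<rho>"
  proof
    assume "F \<in> PR cs \<rho>"
    then obtain g where "partrec g" and g: "\<forall>x\<in>bspace cs. g (benc x) = map_option (inv \<rho>) (F x)"
      unfolding PR_def by blast
    have "partrec (\<lambda>e. g (benc (index_point cs e)))"
      by (rule partrec_comp_total_rec[OF \<open>partrec g\<close> total_rec_benc_index_point])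
    moreover have "g (benc (index_point cs e)) = Some (inv \<rho> (if halts e then b else a))" for e
      using g F index_point_in_bspace[OF bs] point_index_index_point by simp
    moreover have "a \<noteq> b"
      using assms(3,5) by (auto simp: irreflp_def)
    then have "inv \<rho> a \<noteq> inv \<rho> b"
      using assms(2) by (metis bij_inv_eq_iff)
    ultimately show False
      using no_partrec_decides_halts[of "\<lambda>e. g (benc (index_point cs e))" "inv \<rho> b"] by auto
  qed
  moreover have "F \<in> MaxRec cs lt \<rho>"
    unfolding MaxRec_def F_def using halting_approx_Rec2[OF bs] mono_inc_halting_approx[of lt a b cs, OF assms(5)]
    by (intro CollectI exI[of _ "halting_approx cs a b"]) simp
  ultimately show ?thesis
    using F by auto
qed

section \<open>A partial computable function that is no extremum\<close>

definition disagreement :: "nat \<Rightarrow> nat \<Rightarrow> nat" where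
  "disagreement m q = (let n = nfst q; c = point_index n; t = nfst (nsnd q); s = nsnd (nsnd q) in
     if halted c (snoc_code m n 0) s then
       if halted c (snoc_code m n t) s then
         if result c (snoc_code m n 0) s = result c (snoc_code m n t) s then 1 else 0
       else 1
     else 1)"

definition first_result :: "nat \<Rightarrow> nat \<Rightarrow> nat" where
  "first_result m q = result (point_index (nfst q)) (snoc_code m (nfst q) 0) (nsnd (nsnd q))"

definition disagreement_search :: "nat \<Rightarrow> nat \<Rightarrow> nat option" where
  "disagreement_search m n = (if \<exists>k. disagreement m (npair n k) = 0
     then Some (first_result m (npair n (LEAST k. disagreement m (npair n k) = 0))) else None)"

lemma partrec_disagreement_search: "partrec (disagreement_search m)"
proof -
  have "total_rec (disagreement m)"
    unfolding disagreement_def[abs_def] Let_def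
    by (intro total_rec_if_halted total_rec_if_eq total_rec_result total_rec_point_index
        total_rec_snoc_code total_rec_intros)
  moreover have "total_rec (first_result m)"
    unfolding first_result_def[abs_def]
    by (intro total_rec_result total_rec_point_index total_rec_snoc_code total_rec_intros)
  ultimately show ?thesis
    unfolding disagreement_search_def[abs_def] by (rule partrec_search)
qed

lemma disagreement_search_index_point:
  assumes "x = index_point cs c" "x \<in> bspace cs" "bij \<rho>"
    and halted_f: "\<And>t s. halted c (benc (x @ [VN t])) s \<Longrightarrow> f t = Some (\<rho> (result c (benc (x @ [VN t])) s))"
    and f_halts: "\<And>t. \<exists>s. halted c (benc (x @ [VN t])) s"
  shows "disagreement_search (length cs) (benc x) = (if \<exists>t. f t \<noteq> f 0 then Some (inv \<rho> (the (f 0))) else None)"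
proof -
  let ?D = "\<lambda>k. disagreement (length cs) (npair (benc x) k)"
  have index: "point_index (benc x) = c"
    using assms(1) point_index_index_point by simp
  have snoc: "snoc_code (length cs) (benc x) t = benc (x @ [VN t])" for t
    using benc_snoc[OF assms(2)] by simp
  have D_zero: "?D (npair t s) = 0 \<longleftrightarrow> halted c (benc (x @ [VN 0])) s \<and> halted c (benc (x @ [VN t])) s
      \<and> f t \<noteq> f 0" for t s
    using halted_f[of 0 s] halted_f[of t s] assms(3)
    by (auto simp: disagreement_def Let_def index snoc bij_is_inj inj_eq)
  have exists_iff: "(\<exists>k. ?D k = 0) \<longleftrightarrow> (\<exists>t. f t \<noteq> f 0)"
  proof
    assume "\<exists>k. ?D k = 0"
    then obtain t s where "?D (npair t s) = 0"
      by (metis prod_decode_inverse prod.collapse)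
    then show "\<exists>t. f t \<noteq> f 0" using D_zero by blast
  next
    assume "\<exists>t. f t \<noteq> f 0"
    then obtain t where "f t \<noteq> f 0" by blast
    moreover obtain s\<^sub>0 s\<^sub>t where "halted c (benc (x @ [VN 0])) s\<^sub>0" "halted c (benc (x @ [VN t])) s\<^sub>t"
      using f_halts by blast
    ultimately have "?D (npair t (max s\<^sub>0 s\<^sub>t)) = 0"
      using D_zero halted_mono by (metis max.cobounded1 max.cobounded2)
    then show "\<exists>k. ?D k = 0" by blast
  qed
  have first: "first_result (length cs) (npair (benc x) k) = inv \<rho> (the (f 0))" if "?D k = 0" for k
  proof -
    have "halted c (benc (x @ [VN 0])) (nsnd k)"
      using that D_zero[of "nfst k" "nsnd k"] by simp
    then show ?thesis
      using halted_f[of 0] assms(3) by (simp add: first_result_def index snoc bij_is_inj)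
  qed
  show ?thesis
  proof (cases "\<exists>k. ?D k = 0")
    case True
    then have "?D (LEAST k. ?D k = 0) = 0"
      by (rule LeastI_ex)
    with True show ?thesis
      unfolding disagreement_search_def using exists_iff first by simp
  next
    case False
    then show ?thesis
      unfolding disagreement_search_def using exists_iff by simp
  qed
qed

definition disagreement_fun :: "bcomp list \<Rightarrow> (nat \<Rightarrow> 'd) \<Rightarrow> bval list \<Rightarrow> 'd option" where
  "disagreement_fun cs \<rho> x =
     (if x \<in> bspace cs then map_option \<rho> (disagreement_search (length cs) (benc x)) else None)"

lemma disagreement_fun_PR: "bij \<rho> \<Longrightarrow> disagreement_fun cs \<rho> \<in> PR cs \<rho>"
  unfolding PR_def disagreement_fun_def
  using partrec_disagreement_search by (auto simp: option.map_comp bij_is_inj comp_def option.map_ident)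

lemma disagreement_fun_not_MaxRec:
  assumes bs: "basic_space cs" and "bij \<rho>" "irreflp lt" "transp lt"
  shows "disagreement_fun cs \<rho> \<notin> MaxRec cs lt \<rho>"
proof
  assume "disagreement_fun cs \<rho> \<in> MaxRec cs lt \<rho>"
  then obtain f where \<psi>: "disagreement_fun cs \<rho> = maxf lt f" and f: "f \<in> Rec2 cs \<rho>"
    and mono: "mono_inc lt f"
    unfolding MaxRec_def by auto
  obtain c where
    halted_f: "\<And>x t s. x \<in> bspace cs \<Longrightarrow> halted c (benc (x @ [VN t])) s \<Longrightarrow>
        f x t = Some (\<rho> (result c (benc (x @ [VN t])) s))" and
    f_halted: "\<And>x t d. x \<in> bspace cs \<Longrightarrow> f x t = Some d \<Longrightarrow> \<exists>s. halted c (benc (x @ [VN t])) s"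
    using PR2_machine f assms(2) unfolding Rec2_def by blast
  define x where "x = index_point cs c"
  have x: "x \<in> bspace cs"
    unfolding x_def using bs by (rule index_point_in_bspace)
  have total: "f x t \<noteq> None" for t
    using f x unfolding Rec2_def by simp
  then obtain d\<^sub>0 where d\<^sub>0: "f x 0 = Some d\<^sub>0"
    by blast
  have f_halts: "\<exists>s. halted c (benc (x @ [VN t])) s" for t
    using total f_halted[OF x] by blast
  have search: "disagreement_search (length cs) (benc x) =
      (if \<exists>t. f x t \<noteq> f x 0 then Some (inv \<rho> (the (f x 0))) else None)"
    using disagreement_search_index_point[OF x_def x assms(2) halted_f[OF x]] f_halts by blast
  show False
  proof (cases "\<exists>t. f x t \<noteq> f x 0")
    case True
    then obtain t d where t: "f x t = Some d" "d \<noteq> d\<^sub>0"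
      using total d\<^sub>0 by fastforce
    have "maxf lt f x = Some d\<^sub>0"
      using \<psi> search True d\<^sub>0 x assms(2)
      by (metis bij_is_surj disagreement_fun_def option.sel option.simps(9) surj_f_inv_f)
    then show False
      using maxf_eq_initial_imp_const[OF assms(3,4) mono d\<^sub>0 _ t(1)] t(2) by blast
  next
    case False
    then have "maxf lt f x = Some d\<^sub>0"
      using d\<^sub>0 by (intro maxf_const[where t\<^sub>0 = 0]) auto
    moreover have "disagreement_fun cs \<rho> x = None"
      using search False x by (simp add: disagreement_fun_def)
    ultimately show False
      using \<psi> by simp
  qed
qed

lemma PR_not_subset_MinRec_MaxRec:
  assumes "basic_space cs" "bij \<rho>" "irreflp lt" "transp lt"
  shows "\<not> PR cs \<rho> \<subseteq> MinRec cs lt \<rho> \<union> MaxRec cs lt \<rho>"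
proof -
  have "irreflp lt\<inverse>\<inverse>" "transp lt\<inverse>\<inverse>"
    using assms(3,4) by (auto simp: irreflp_def transp_def)
  then have "disagreement_fun cs \<rho> \<notin> MinRec cs lt \<rho> \<union> MaxRec cs lt \<rho>"
    using disagreement_fun_not_MaxRec assms unfolding MinRec_eq_MaxRec_conversep by blast
  then show ?thesis
    using disagreement_fun_PR[OF assms(2)] by blast
qed

theorem mainTheorem10:
  fixes cs :: "bcomp list" and lt :: "'d \<Rightarrow> 'd \<Rightarrow> bool" and \<rho> :: "nat \<Rightarrow> 'd"
  assumes "basic_space cs" and "comp_poset lt \<rho>"
  shows "((\<forall>a b. \<not> lt a b) \<longrightarrow>
            PR cs \<rho> = MaxPR cs lt \<rho> \<and> Rec cs \<rho> = MaxRec cs lt \<rho>)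
       \<and> ((\<exists>a b. lt a b) \<longrightarrow>
            (\<exists>F \<in> MaxRec cs lt \<rho>. (\<forall>x\<in>bspace cs. F x \<noteq> None) \<and> F \<notin> PR cs \<rho>)
            \<and> PR cs \<rho> \<subset> MaxPR cs lt \<rho> \<and> Rec cs \<rho> \<subset> MaxRec cs lt \<rho>)
       \<and> \<not> (PR cs \<rho> \<subseteq> MinRec cs lt \<rho> \<union> MaxRec cs lt \<rho>)"
proof (intro conjI impI)
  have \<rho>: "bij \<rho>" and order: "irreflp lt" "transp lt"
    using assms(2) unfolding comp_poset_def by auto
  have Rec_PR: "Rec cs \<rho> \<subseteq> PR cs \<rho>"
    unfolding Rec_def by blast
  show "PR cs \<rho> = MaxPR cs lt \<rho>" "Rec cs \<rho> = MaxRec cs lt \<rho>" if "\<forall>a b. \<not> lt a b"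
    using PR_subset_MaxPR MaxPR_subset_PR[OF \<rho> that] Rec_subset_MaxRec MaxRec_subset_Rec[OF \<rho> that]
    by blast+
  assume "\<exists>a b. lt a b"
  then obtain F where F: "F \<in> MaxRec cs lt \<rho>" "\<forall>x\<in>bspace cs. F x \<noteq> None" "F \<notin> PR cs \<rho>"
    using MaxRec_noncomputable[OF assms(1) \<rho> order] by blast
  then show "\<exists>F \<in> MaxRec cs lt \<rho>. (\<forall>x\<in>bspace cs. F x \<noteq> None) \<and> F \<notin> PR cs \<rho>"
    by blast
  show "PR cs \<rho> \<subset> MaxPR cs lt \<rho>" "Rec cs \<rho> \<subset> MaxRec cs lt \<rho>"
    using F Rec_PR PR_subset_MaxPR Rec_subset_MaxRec MaxRec_subset_MaxPR by blast+
next
  show "\<not> PR cs \<rho> \<subseteq> MinRec cs lt \<rho> \<union> MaxRec cs lt \<rho>"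
    using assms PR_not_subset_MinRec_MaxRec unfolding comp_poset_def by blast
qed

end
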